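(* Let $A\in\mathbb{R}^{n\times n}$, $B\in\mathbb{R}^{n\times m}$, $C\in\mathbb{R}^{p\times n}$, $D\in\mathbb{R}^{p\times p}$ with $(A,B)$ reachable, $(C,A)$ observable, $BB^T\succ0$, $DD^T\succ0$. Fix $c>0$ and a positive integer $N$. Let $P_0\in\mathcal{P}$ be arbitrary, $P_{t+1}=r^R_c(P_t)$ for $t\ge0$, and $P^d_k=P_{kN}$ for $k\ge0$ (the $N$-block, i.e. downsampled, iteration). Let $(\overline{P}_t)_{t\ge0}$ be defined by $\overline{P}_0=BB^T$, $\overline{P}_{t+1}=r(\overline{P}_t)$. Then for every integer $q\ge0$, $$P_t\succeq\overline{P}_q\quad\text{for all } t\ge q+1,\qquad\text{and}\qquad P^d_k\succeq \overline{P}_q\quad\text{for all } k\ge \Big\lceil \tfrac{q+1}{N}\Big\rceil.$$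
   Context: $\mathcal{P}$ denotes the cone of $n\times n$ real symmetric positive definite matrices; $\succeq$ is the Loewner order; $\lambda_1(P)$ is the largest eigenvalue of $P$. For $P\in\mathcal{P}$ and $\theta$ with $I-\theta P\succ0$, let $\gamma(\theta,P)=\tfrac12\big[\log\det(I-\theta P)+\mathrm{tr}((I-\theta P)^{-1})-n\big]$. For $c>0$ and $P\in\mathcal{P}$, $\theta_c(P)$ denotes the unique $\theta\in(0,\lambda_1(P)^{-1})$ with $\gamma(\theta,P)=c$ (its existence and uniqueness are taken as given). Define $r^R_c(P)=A[P^{-1}+C^T(DD^T)^{-1}C-\theta_c(P)I_n]^{-1}A^T+BB^T$ (the risk sensitive like Riccati map) and $r(P)=A[P^{-1}+C^T(DD^T)^{-1}C]^{-1}A^T+BB^T$ (the Riccati map). *)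

theory Defs
  imports "HOL-Analysis.Analysis"
begin

type_synonym 'n sqmat = "real^'n^'n"

fun mat_pow :: "real^'n^'n \<Rightarrow> nat \<Rightarrow> real^'n^'n" where
  "mat_pow A 0 = mat 1"
| "mat_pow A (Suc k) = A ** mat_pow A k"

definition pos_def :: "real^'n^'n \<Rightarrow> bool" where
  "pos_def P \<longleftrightarrow> transpose P = P \<and> (\<forall>x. x \<noteq> 0 \<longrightarrow> x \<bullet> (P *v x) > 0)"

definition loewner_ge :: "real^'n^'n \<Rightarrow> real^'n^'n \<Rightarrow> bool" where
  "loewner_ge P Q \<longleftrightarrow> (\<forall>x. x \<bullet> ((P - Q) *v x) \<ge> 0)"

definition reachable :: "real^'n^'n \<Rightarrow> real^'m^'n \<Rightarrow> bool" where
  "reachable A B \<longleftrightarrow>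
     span (\<Union>k<CARD('n). range (\<lambda>u. (mat_pow A k ** B) *v u)) = (UNIV :: (real^'n) set)"

definition observable :: "real^'n^'p \<Rightarrow> real^'n^'n \<Rightarrow> bool" where
  "observable C A \<longleftrightarrow>
     (\<forall>x::real^'n. (\<forall>k<CARD('n). (C ** mat_pow A k) *v x = 0) \<longrightarrow> x = 0)"

definition lambda1 :: "real^'n^'n \<Rightarrow> real" where
  "lambda1 P = Max {l. \<exists>v. v \<noteq> 0 \<and> P *v v = l *\<^sub>R v}"

definition gamma :: "real \<Rightarrow> real^'n^'n \<Rightarrow> real" where
  "gamma \<theta> P = (ln (det (mat 1 - \<theta> *\<^sub>R P)) + trace (matrix_inv (mat 1 - \<theta> *\<^sub>R P))
                  - real CARD('n)) / 2"

definition theta_c :: "real \<Rightarrow> real^'n^'n \<Rightarrow> real" where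
  "theta_c c P = (THE \<theta>. 0 < \<theta> \<and> \<theta> < inverse (lambda1 P) \<and> gamma \<theta> P = c)"

definition riccati_R :: "real \<Rightarrow> real^'n^'n \<Rightarrow> real^'m^'n \<Rightarrow> real^'n^'p \<Rightarrow> real^'p^'p
    \<Rightarrow> real^'n^'n \<Rightarrow> real^'n^'n" where
  "riccati_R c A B C D P =
     A ** matrix_inv (matrix_inv P + transpose C ** matrix_inv (D ** transpose D) ** C
                      - theta_c c P *\<^sub>R mat 1) ** transpose A + B ** transpose B"

definition riccati :: "real^'n^'n \<Rightarrow> real^'m^'n \<Rightarrow> real^'n^'p \<Rightarrow> real^'p^'p
    \<Rightarrow> real^'n^'n \<Rightarrow> real^'n^'n" where
  "riccati A B C D P =
     A ** matrix_inv (matrix_inv P + transpose C ** matrix_inv (D ** transpose D) ** C) ** transpose A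
     + B ** transpose B"

end

theory Submission imports Defs begin

text \<open>
  Since \<open>\<theta>\<^sub>c(P) > 0\<close>, the matrix \<open>P\<^sup>-\<^sup>1 + C\<^sup>T (DD\<^sup>T)\<^sup>-\<^sup>1 C - \<theta>\<^sub>c(P) I\<close> lies below
  \<open>P\<^sup>-\<^sup>1 + C\<^sup>T (DD\<^sup>T)\<^sup>-\<^sup>1 C\<close> in the Loewner order, and \<open>\<theta>\<^sub>c(P) < 1/\<lambda>\<^sub>1(P)\<close> keeps it
  positive definite. As inversion is antitone on positive definite matrices, this gives
  \<open>r\<^sup>R\<^sub>c(P) \<succeq> r(P) \<succeq> BB\<^sup>T\<close>. The Riccati map \<open>r\<close> is monotone, so by induction on \<open>q\<close>,
  \<open>P\<^sub>t \<succeq> r(P\<^sub>t\<^sub>-\<^sub>1) \<succeq> r(Pbar\<^sub>q\<^sub>-\<^sub>1) = Pbar\<^sub>q\<close> whenever \<open>t \<ge> q + 1\<close>; the downsampled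
  statement is the case \<open>t = kN\<close>.
\<close>

definition psd :: "real^'n^'n \<Rightarrow> bool" where
  "psd M \<longleftrightarrow> transpose M = M \<and> (\<forall>x. 0 \<le> x \<bullet> (M *v x))"

lemma transpose_add: "transpose (X + Y) = transpose X + transpose (Y::real^'n^'m)"
  by (simp add: transpose_def vec_eq_iff)

lemma transpose_diff: "transpose (X - Y) = transpose X - transpose (Y::real^'n^'m)"
  by (simp add: transpose_def vec_eq_iff)

lemma inner_matrix_vector_transpose: "x \<bullet> (M *v y) = (transpose M *v x) \<bullet> (y::real^'n)"
  for M :: "real^'n^'m"
  by (simp add: dot_lmul_matrix)

lemma inner_symmetric_matrix:
  "transpose M = M \<Longrightarrow> x \<bullet> (M *v y) = y \<bullet> (M *v (x::real^'n))"
  for M :: "real^'n^'n"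
  by (metis inner_matrix_vector_transpose inner_commute)

lemma scaleR_mat_1_vector: "((t::real) *\<^sub>R mat 1) *v (y::real^'n) = t *\<^sub>R y"
  by (simp add: scaleR_matrix_vector_assoc[symmetric])

lemma congruence_matrix_vector:
  "(A ** X ** transpose A) *v x = A *v (X *v (transpose A *v x))"
  for A :: "real^'n^'m" and X :: "real^'n^'n"
  by (metis matrix_vector_mul_assoc)

lemma matrix_inv_both_sides:
  fixes M :: "real^'n^'n"
  assumes "invertible M"
  shows "M ** matrix_inv M = mat 1" "matrix_inv M ** M = mat 1"
proof -
  have "\<exists>M'. M ** M' = mat 1 \<and> M' ** M = mat 1" using assms invertible_def by blast
  then have "M ** matrix_inv M = mat 1 \<and> matrix_inv M ** M = mat 1"
    unfolding matrix_inv_def by (rule someI_ex)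
  then show "M ** matrix_inv M = mat 1" "matrix_inv M ** M = mat 1" by auto
qed

lemma matrix_inv_vector:
  fixes M :: "real^'n^'n"
  assumes "invertible M"
  shows "M *v (matrix_inv M *v y) = y" "matrix_inv M *v (M *v y) = y"
  using matrix_inv_both_sides[OF assms] by (simp_all add: matrix_vector_mul_assoc)

lemma transpose_matrix_inv_symmetric:
  fixes P :: "real^'n^'n"
  assumes "invertible P" "transpose P = P"
  shows "transpose (matrix_inv P) = matrix_inv P"
proof -
  have left: "transpose (matrix_inv P) ** P = mat 1"
    by (metis assms matrix_inv_both_sides(1) matrix_transpose_mul transpose_mat)
  have "transpose (matrix_inv P) = transpose (matrix_inv P) ** (P ** matrix_inv P)"
    using matrix_inv_both_sides(1)[OF assms(1)] by simp
  also have "\<dots> = matrix_inv P"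
    by (simp add: matrix_mul_assoc left)
  finally show ?thesis .
qed

subsection \<open>Positive (semi)definite matrices and the Loewner order\<close>

lemma pos_def_imp_psd: "pos_def P \<Longrightarrow> psd P"
  unfolding pos_def_def psd_def
  by (metis inner_zero_left matrix_vector_mult_0_right order_less_imp_le order_refl)

lemma pos_def_add_psd: "pos_def P \<Longrightarrow> psd K \<Longrightarrow> pos_def (P + K)"
  unfolding pos_def_def psd_def
  by (simp add: transpose_add matrix_vector_mult_add_rdistrib inner_add_right add_pos_nonneg)

lemma psd_scaleR_mat_1: "0 \<le> t \<Longrightarrow> psd ((t::real) *\<^sub>R (mat 1 :: real^'n^'n))"
  unfolding psd_def by (simp add: transpose_scalar scaleR_mat_1_vector)

lemma psd_congruence:
  fixes A :: "real^'n^'m" and X :: "real^'n^'n"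
  assumes "psd X" shows "psd (A ** X ** transpose A)"
proof -
  have "transpose (A ** X ** transpose A) = A ** X ** transpose A"
    using assms unfolding psd_def by (simp add: matrix_transpose_mul matrix_mul_assoc)
  moreover have "0 \<le> x \<bullet> ((A ** X ** transpose A) *v x)" for x
    unfolding congruence_matrix_vector inner_matrix_vector_transpose[of x A]
    using assms psd_def by (metis inner_commute)
  ultimately show ?thesis unfolding psd_def by blast
qed

lemma pos_def_invertible:
  fixes P :: "real^'n^'n"
  assumes "pos_def P" shows "invertible P"
proof -
  have "\<forall>x. P *v x = 0 \<longrightarrow> x = 0"
    using assms unfolding pos_def_def by (metis inner_zero_right less_irrefl)
  then show ?thesis using matrix_left_invertible_ker invertible_left_inverse by blast
qed

lemma pos_def_matrix_inv:
  fixes P :: "real^'n^'n"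
  assumes "pos_def P" shows "pos_def (matrix_inv P)"
proof -
  have inv: "invertible P" using pos_def_invertible assms by blast
  have sym: "transpose P = P" using assms pos_def_def by blast
  have "y \<bullet> (matrix_inv P *v y) > 0" if "y \<noteq> 0" for y
  proof -
    define x where "x = matrix_inv P *v y"
    have y: "y = P *v x" unfolding x_def using matrix_inv_vector[OF inv] by simp
    with that have "x \<noteq> 0" by auto
    then have "x \<bullet> (P *v x) > 0" using assms pos_def_def by blast
    then show ?thesis unfolding y using matrix_inv_vector(2)[OF inv] by (simp add: inner_commute)
  qed
  then show ?thesis
    unfolding pos_def_def using transpose_matrix_inv_symmetric[OF inv sym] by blast
qed

lemma pos_def_congruence_inv_add:
  fixes A :: "real^'n^'m" and M :: "real^'n^'n"
  assumes "pos_def M" "pos_def BB"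
  shows "pos_def (A ** matrix_inv M ** transpose A + BB)"
  using pos_def_add_psd[OF assms(2) psd_congruence[OF pos_def_imp_psd[OF pos_def_matrix_inv[OF assms(1)]]]]
  by (simp only: add.commute)

lemma loewner_ge_trans: "loewner_ge X Y \<Longrightarrow> loewner_ge Y Z \<Longrightarrow> loewner_ge X (Z::real^'n^'n)"
proof -
  have "x \<bullet> ((X - Z) *v x) = x \<bullet> ((X - Y) *v x) + x \<bullet> ((Y - Z) *v x)" for x
    by (simp add: matrix_vector_mult_diff_rdistrib inner_diff_right)
  then show "loewner_ge X Y \<Longrightarrow> loewner_ge Y Z \<Longrightarrow> loewner_ge X Z"
    unfolding loewner_ge_def by (simp add: add_nonneg_nonneg)
qed

lemma loewner_ge_add_right: "loewner_ge X Y \<Longrightarrow> loewner_ge (X + Z) (Y + Z)"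
  unfolding loewner_ge_def by simp

lemma loewner_ge_add_psd: "psd K \<Longrightarrow> loewner_ge (X + K) X"
  unfolding loewner_ge_def psd_def by simp

lemma loewner_ge_congruence:
  fixes A :: "real^'n^'m" and X Y :: "real^'n^'n"
  assumes "loewner_ge X Y"
  shows "loewner_ge (A ** X ** transpose A) (A ** Y ** transpose A)"
proof -
  have "x \<bullet> ((A ** X ** transpose A - A ** Y ** transpose A) *v x) =
        (transpose A *v x) \<bullet> ((X - Y) *v (transpose A *v x))" for x
    by (simp add: matrix_vector_mult_diff_rdistrib congruence_matrix_vector
        inner_matrix_vector_transpose[of x A] matrix_vector_mult_diff_distrib inner_diff_right)
  then show ?thesis using assms unfolding loewner_ge_def by simp
qed

text \<open>Inversion is antitone: with \<open>Q u = y = P w\<close>, expanding \<open>(w - u)\<^sup>T Q (w - u) \<ge> 0\<close>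
  and using \<open>w\<^sup>T Q w \<le> w\<^sup>T P w = w\<^sup>T y\<close> gives \<open>y\<^sup>T P\<^sup>-\<^sup>1 y = w\<^sup>T y \<le> u\<^sup>T y = y\<^sup>T Q\<^sup>-\<^sup>1 y\<close>.\<close>

lemma loewner_ge_matrix_inv:
  fixes P Q :: "real^'n^'n"
  assumes pP: "pos_def P" and pQ: "pos_def Q" and ge: "loewner_ge P Q"
  shows "loewner_ge (matrix_inv Q) (matrix_inv P)"
proof -
  have invP: "invertible P" and invQ: "invertible Q" using pP pQ pos_def_invertible by auto
  have symQ: "transpose Q = Q" using pQ pos_def_def by blast
  have "y \<bullet> (matrix_inv P *v y) \<le> y \<bullet> (matrix_inv Q *v y)" for y
  proof -
    define u where "u = matrix_inv Q *v y"
    define w where "w = matrix_inv P *v y"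
    have Qu: "Q *v u = y" unfolding u_def using matrix_inv_vector[OF invQ] by simp
    have Pw: "P *v w = y" unfolding w_def using matrix_inv_vector[OF invP] by simp
    have "0 \<le> (w - u) \<bullet> (Q *v (w - u))" using pos_def_imp_psd[OF pQ] psd_def by blast
    also have "\<dots> = w \<bullet> (Q *v w) - 2 * (w \<bullet> y) + u \<bullet> y"
      using inner_symmetric_matrix[OF symQ, of u w] Qu
      by (simp add: matrix_vector_mult_diff_distrib inner_diff_left inner_diff_right)
    finally have expand: "0 \<le> w \<bullet> (Q *v w) - 2 * (w \<bullet> y) + u \<bullet> y" .
    have "0 \<le> w \<bullet> ((P - Q) *v w)" using ge loewner_ge_def by blast
    then have "w \<bullet> (Q *v w) \<le> w \<bullet> y" using Pw
      by (simp add: matrix_vector_mult_diff_rdistrib inner_diff_right)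
    with expand have "w \<bullet> y \<le> u \<bullet> y" by linarith
    then show ?thesis unfolding u_def w_def by (simp add: inner_commute)
  qed
  then show ?thesis unfolding loewner_ge_def
    by (simp add: matrix_vector_mult_diff_rdistrib inner_diff_right)
qed

lemma loewner_ge_congruence_inv_add:
  fixes A :: "real^'n^'m" and M M' :: "real^'n^'n"
  assumes "pos_def M" "pos_def M'" "loewner_ge M' M"
  shows "loewner_ge (A ** matrix_inv M ** transpose A + BB) (A ** matrix_inv M' ** transpose A + BB)"
  by (intro loewner_ge_add_right loewner_ge_congruence loewner_ge_matrix_inv assms)

lemma cauchy_schwarz_psd:
  fixes S :: "real^'n^'n"
  assumes "psd S"
  shows "(x \<bullet> (S *v y))\<^sup>2 \<le> (x \<bullet> (S *v x)) * (y \<bullet> (S *v y))"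
proof -
  have nonneg: "\<And>u. 0 \<le> u \<bullet> (S *v u)" using assms psd_def by blast
  have sym: "y \<bullet> (S *v x) = x \<bullet> (S *v y)"
    using assms inner_symmetric_matrix unfolding psd_def by blast
  define a b c where "a = x \<bullet> (S *v x)" and "b = x \<bullet> (S *v y)" and "c = y \<bullet> (S *v y)"
  have quadratic: "0 \<le> a + 2 * t * b + t\<^sup>2 * c" for t
  proof -
    have "(x + t *\<^sub>R y) \<bullet> (S *v (x + t *\<^sub>R y)) = a + 2 * t * b + t\<^sup>2 * c"
      unfolding a_def b_def c_def
      by (simp add: matrix_vector_mult_add_rdistrib matrix_vector_mult_scaleR algebra_simps
           inner_add_left inner_add_right sym power2_eq_square)
    then show ?thesis using nonneg by metis
  qed
  show ?thesis
  proof (cases "c = 0")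
    case True
    have "b = 0"
    proof (rule ccontr)
      assume "b \<noteq> 0"
      then show False using quadratic[of "-(a+1)/(2*b)"] True by (simp add: field_simps)
    qed
    then show ?thesis using True unfolding a_def b_def c_def by simp
  next
    case False
    then have "c > 0" using nonneg c_def by (metis less_eq_real_def)
    moreover have "0 \<le> a + 2 * (-b/c) * b + (-b/c)\<^sup>2 * c" using quadratic by blast
    ultimately have "b\<^sup>2 \<le> a * c" by (simp add: power2_eq_square field_simps)
    then show ?thesis unfolding a_def b_def c_def .
  qed
qed

subsection \<open>The largest eigenvalue\<close>

lemma finite_eigenvalues_symmetric:
  fixes P :: "real^'n^'n"
  assumes sym: "transpose P = P"
  shows "finite {l. \<exists>v. v \<noteq> 0 \<and> P *v v = l *\<^sub>R v}"
proof -
  define E where "E = {l. \<exists>v. v \<noteq> 0 \<and> P *v v = l *\<^sub>R v}"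
  define f where "f l = (SOME v. v \<noteq> 0 \<and> P *v v = l *\<^sub>R v)" for l
  have f: "f l \<noteq> 0 \<and> P *v f l = l *\<^sub>R f l" if "l \<in> E" for l
    using that unfolding E_def f_def by (metis (mono_tags, lifting) mem_Collect_eq someI_ex)
  have inj: "inj_on f E"
  proof (rule inj_onI)
    fix a b assume "a \<in> E" "b \<in> E" "f a = f b"
    then have "a *\<^sub>R f a = b *\<^sub>R f a" "f a \<noteq> 0" using f by metis+
    then show "a = b" by simp
  qed
  have orth: "f a \<bullet> f b = 0" if "a \<in> E" "b \<in> E" "a \<noteq> b" for a b
  proof -
    have "a * (f a \<bullet> f b) = (P *v f a) \<bullet> f b" using f[OF that(1)] by simp
    also have "\<dots> = f a \<bullet> (P *v f b)"
      using inner_symmetric_matrix[OF sym, of "f b" "f a"] by (simp add: inner_commute)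
    also have "\<dots> = b * (f a \<bullet> f b)" using f[OF that(2)] by simp
    finally show ?thesis using that(3) by simp
  qed
  have "pairwise orthogonal (f ` E)"
    unfolding pairwise_def orthogonal_def using orth by blast
  moreover have "0 \<notin> f ` E" using f by auto
  ultimately have "independent (f ` E)" by (rule pairwise_orthogonal_independent)
  then have "finite (f ` E)" by (rule finiteI_independent)
  with inj have "finite E" using finite_imageD by blast
  then show ?thesis unfolding E_def .
qed

text \<open>A maximiser of the Rayleigh quotient on the unit sphere is an eigenvector: for
  \<open>S = \<mu> I - P\<close>, which is psd, \<open>x\<^sub>0\<^sup>T S x\<^sub>0 = 0\<close> forces \<open>S x\<^sub>0 = 0\<close> by Cauchy-Schwarz.\<close>

lemma rayleigh_maximiser_eigenvector:
  fixes P :: "real^'n^'n"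
  assumes sym: "transpose P = P"
  obtains \<mu> x0 where "x0 \<noteq> 0" "P *v x0 = \<mu> *\<^sub>R x0" "\<And>x. x \<bullet> (P *v x) \<le> \<mu> * (x \<bullet> x)"
proof -
  have "bounded_linear (\<lambda>x. P *v x)"
    using linear_conv_bounded_linear matrix_vector_mul_linear by blast
  then have "continuous_on (sphere (0::real^'n) 1) (\<lambda>x. x \<bullet> (P *v x))"
    by (intro continuous_intros bounded_linear.continuous_on)
  moreover have "sphere (0::real^'n) 1 \<noteq> {}" by simp
  ultimately obtain x0 where x0: "x0 \<in> sphere 0 1"
    and max: "\<And>y. y \<in> sphere 0 1 \<Longrightarrow> y \<bullet> (P *v y) \<le> x0 \<bullet> (P *v x0)"
    using continuous_attains_sup[OF compact_sphere] by blast
  define \<mu> where "\<mu> = x0 \<bullet> (P *v x0)"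
  have x0_unit: "x0 \<bullet> x0 = 1" using x0 by (simp add: norm_eq_sqrt_inner)
  have bound: "x \<bullet> (P *v x) \<le> \<mu> * (x \<bullet> x)" for x
  proof (cases "x = 0")
    case False
    define z where "z = (1 / norm x) *\<^sub>R x"
    have "z \<in> sphere 0 1" using False unfolding z_def by simp
    then have "z \<bullet> (P *v z) \<le> \<mu>" using max \<mu>_def by blast
    moreover have "z \<bullet> (P *v z) = (x \<bullet> (P *v x)) / (x \<bullet> x)"
      unfolding z_def
      by (simp add: matrix_vector_mult_scaleR power2_norm_eq_inner[symmetric] power2_eq_square)
    moreover have "x \<bullet> x > 0" using False by simp
    ultimately show ?thesis by (simp add: divide_le_eq mult.commute)
  qed simp
  define S where "S = \<mu> *\<^sub>R mat 1 - P"
  have Sv: "S *v v = \<mu> *\<^sub>R v - P *v v" for v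
    unfolding S_def by (simp add: matrix_vector_mult_diff_rdistrib scaleR_mat_1_vector)
  have "psd S"
    unfolding psd_def
  proof
    show "transpose S = S" unfolding S_def by (simp add: transpose_diff transpose_scalar sym)
    show "\<forall>x. 0 \<le> x \<bullet> (S *v x)" using bound by (simp add: Sv inner_diff_right)
  qed
  then have "((S *v x0) \<bullet> (S *v x0))\<^sup>2 \<le> ((S *v x0) \<bullet> (S *v (S *v x0))) * (x0 \<bullet> (S *v x0))"
    by (rule cauchy_schwarz_psd)
  moreover have "x0 \<bullet> (S *v x0) = 0" using x0_unit by (simp add: Sv inner_diff_right \<mu>_def)
  ultimately have "((S *v x0) \<bullet> (S *v x0))\<^sup>2 \<le> 0" by simp
  then have "S *v x0 = 0" by simp
  then have "P *v x0 = \<mu> *\<^sub>R x0" using Sv[of x0] by simp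
  moreover have "x0 \<noteq> 0" using x0 by auto
  ultimately show ?thesis using bound that by blast
qed

lemma lambda1_symmetric:
  fixes P :: "real^'n^'n"
  assumes sym: "transpose P = P"
  shows "\<exists>x. x \<noteq> 0 \<and> P *v x = lambda1 P *\<^sub>R x"
    and "x \<bullet> (P *v x) \<le> lambda1 P * (x \<bullet> x)"
proof -
  obtain \<mu> x0 where x0: "x0 \<noteq> 0" "P *v x0 = \<mu> *\<^sub>R x0"
    and bound: "\<And>x. x \<bullet> (P *v x) \<le> \<mu> * (x \<bullet> x)"
    using rayleigh_maximiser_eigenvector[OF sym] by blast
  define E where "E = {l. \<exists>v. v \<noteq> 0 \<and> P *v v = l *\<^sub>R v}"
  have le: "l \<le> \<mu>" if "l \<in> E" for l
  proof -
    obtain v where v: "v \<noteq> 0" "P *v v = l *\<^sub>R v" using \<open>l \<in> E\<close> unfolding E_def by blast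
    have "l * (v \<bullet> v) = v \<bullet> (P *v v)" using v by simp
    also have "\<dots> \<le> \<mu> * (v \<bullet> v)" by (rule bound)
    finally show "l \<le> \<mu>" using v(1) by (simp add: mult_le_cancel_right)
  qed
  have "lambda1 P = \<mu>" unfolding lambda1_def E_def[symmetric]
    using finite_eigenvalues_symmetric[OF sym] le x0 unfolding E_def
    by (intro Max_eqI) auto
  then show "\<exists>x. x \<noteq> 0 \<and> P *v x = lambda1 P *\<^sub>R x" "x \<bullet> (P *v x) \<le> lambda1 P * (x \<bullet> x)"
    using x0 bound by auto
qed

lemma lambda1_pos:
  fixes P :: "real^'n^'n"
  assumes "pos_def P" shows "0 < lambda1 P"
proof -
  obtain x where x: "x \<noteq> 0" "P *v x = lambda1 P *\<^sub>R x"
    using lambda1_symmetric(1) assms pos_def_def by blast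
  have "0 < x \<bullet> (P *v x)" using assms x(1) pos_def_def by blast
  also have "\<dots> = lambda1 P * (x \<bullet> x)" using x by simp
  finally show ?thesis using x(1) inner_ge_zero[of x] by (auto simp: zero_less_mult_iff)
qed

lemma inner_image_le_lambda1:
  fixes P :: "real^'n^'n"
  assumes pP: "pos_def P"
  shows "(P *v x) \<bullet> (P *v x) \<le> lambda1 P * (x \<bullet> (P *v x))"
proof -
  have sym: "transpose P = P" using pP pos_def_def by blast
  define w a where "w = P *v x" and "a = x \<bullet> (P *v x)"
  have a: "0 \<le> a" unfolding w_def a_def using pos_def_imp_psd[OF pP] psd_def by blast
  have "(w \<bullet> w)\<^sup>2 = (x \<bullet> (P *v w))\<^sup>2"
    using inner_symmetric_matrix[OF sym, of x w] unfolding w_def a_def by simp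
  also have "\<dots> \<le> a * (w \<bullet> (P *v w))"
    unfolding w_def a_def using cauchy_schwarz_psd[OF pos_def_imp_psd[OF pP]] by blast
  also have "\<dots> \<le> a * (lambda1 P * (w \<bullet> w))"
    using lambda1_symmetric(2)[OF sym] a by (rule mult_left_mono)
  finally have "(w \<bullet> w) * (w \<bullet> w) \<le> (lambda1 P * a) * (w \<bullet> w)"
    by (simp add: power2_eq_square mult_ac)
  then have "w \<bullet> w \<le> lambda1 P * a"
    using a lambda1_pos[OF pP] by (cases "w \<bullet> w > 0") (auto simp: mult_le_cancel_right)
  then show ?thesis unfolding w_def a_def .
qed

lemma pos_def_matrix_inv_minus_scaleR:
  fixes P :: "real^'n^'n"
  assumes pP: "pos_def P" and "0 \<le> \<theta>" and "\<theta> < inverse (lambda1 P)"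
  shows "pos_def (matrix_inv P - \<theta> *\<^sub>R mat 1)"
proof -
  have sym: "transpose P = P" using pP pos_def_def by blast
  have inv: "invertible P" using pP pos_def_invertible by blast
  have small: "\<theta> * lambda1 P < 1"
    using assms lambda1_pos[OF pP] by (simp add: field_simps)
  have "y \<bullet> ((matrix_inv P - \<theta> *\<^sub>R mat 1) *v y) > 0" if "y \<noteq> 0" for y
  proof -
    define x where "x = matrix_inv P *v y"
    have y: "y = P *v x" unfolding x_def using matrix_inv_vector[OF inv] by simp
    with that have "x \<noteq> 0" by auto
    then have pos: "x \<bullet> (P *v x) > 0" using pP pos_def_def by blast
    have "(1 - \<theta> * lambda1 P) * (x \<bullet> (P *v x)) \<le> x \<bullet> (P *v x) - \<theta> * ((P *v x) \<bullet> (P *v x))"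
      using mult_left_mono[OF inner_image_le_lambda1[OF pP, of x] \<open>0 \<le> \<theta>\<close>]
      by (simp add: algebra_simps)
    also have "\<dots> = y \<bullet> ((matrix_inv P - \<theta> *\<^sub>R mat 1) *v y)"
      unfolding y using matrix_inv_vector(2)[OF inv]
      by (simp add: matrix_vector_mult_diff_rdistrib scaleR_mat_1_vector inner_diff_right inner_commute)
    finally show ?thesis using small pos by (smt (verit) mult_pos_pos)
  qed
  moreover have "transpose (matrix_inv P - \<theta> *\<^sub>R mat 1) = matrix_inv P - \<theta> *\<^sub>R mat 1"
    by (simp add: transpose_diff transpose_scalar transpose_matrix_inv_symmetric[OF inv sym])
  ultimately show ?thesis unfolding pos_def_def by blast
qed

subsection \<open>The Riccati maps\<close>

lemma psd_observation_term:
  fixes C :: "real^'n^'p" and D :: "real^'p^'p"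
  assumes "pos_def (D ** transpose D)"
  shows "psd (transpose C ** matrix_inv (D ** transpose D) ** C)"
  using psd_congruence[OF pos_def_imp_psd[OF pos_def_matrix_inv[OF assms]], of "transpose C"]
  by simp

context
  fixes A :: "real^'n^'n" and B :: "real^'m^'n" and C :: "real^'n^'p" and D :: "real^'p^'p"
  assumes BB: "pos_def (B ** transpose B)" and DD: "pos_def (D ** transpose D)"
begin

lemma pos_def_riccati: "pos_def P \<Longrightarrow> pos_def (riccati A B C D P)"
  unfolding riccati_def
  by (intro pos_def_congruence_inv_add pos_def_add_psd pos_def_matrix_inv psd_observation_term DD BB)

lemma riccati_mono:
  assumes "pos_def P" "pos_def Q" "loewner_ge P Q"
  shows "loewner_ge (riccati A B C D P) (riccati A B C D Q)"
  unfolding riccati_def using assms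
  by (intro loewner_ge_congruence_inv_add loewner_ge_add_right loewner_ge_matrix_inv
      pos_def_add_psd pos_def_matrix_inv psd_observation_term DD)

lemma riccati_ge_BB: "pos_def P \<Longrightarrow> loewner_ge (riccati A B C D P) (B ** transpose B)"
  unfolding riccati_def
  by (metis add.commute loewner_ge_add_psd psd_congruence pos_def_imp_psd pos_def_matrix_inv
      pos_def_add_psd psd_observation_term DD)

lemma
  assumes pP: "pos_def P" and "0 \<le> theta_c c P" and "theta_c c P < inverse (lambda1 P)"
  shows pos_def_riccati_R: "pos_def (riccati_R c A B C D P)"
    and riccati_R_ge_riccati: "loewner_ge (riccati_R c A B C D P) (riccati A B C D P)"
proof -
  define K where "K = transpose C ** matrix_inv (D ** transpose D) ** C"
  define \<theta> where "\<theta> = theta_c c P"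
  have K: "psd K" unfolding K_def by (rule psd_observation_term[OF DD])
  have M: "matrix_inv P + K - \<theta> *\<^sub>R mat 1 = (matrix_inv P - \<theta> *\<^sub>R mat 1) + K"
    by (simp add: algebra_simps)
  have pM: "pos_def (matrix_inv P + K - \<theta> *\<^sub>R mat 1)"
    unfolding M using assms unfolding \<theta>_def[symmetric]
    by (intro pos_def_add_psd pos_def_matrix_inv_minus_scaleR K)
  then show "pos_def (riccati_R c A B C D P)"
    unfolding riccati_R_def K_def[symmetric] \<theta>_def[symmetric]
    by (rule pos_def_congruence_inv_add[OF _ BB])
  have "loewner_ge (matrix_inv P + K - \<theta> *\<^sub>R mat 1 + \<theta> *\<^sub>R mat 1) (matrix_inv P + K - \<theta> *\<^sub>R mat 1)"
    using assms unfolding \<theta>_def by (intro loewner_ge_add_psd psd_scaleR_mat_1)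
  then show "loewner_ge (riccati_R c A B C D P) (riccati A B C D P)"
    unfolding riccati_R_def riccati_def K_def[symmetric] \<theta>_def[symmetric]
    using pM pP K by (intro loewner_ge_congruence_inv_add) (auto intro: pos_def_add_psd pos_def_matrix_inv)
qed

end

lemma theta_c_bounds:
  assumes "\<exists>!\<theta>. 0 < \<theta> \<and> \<theta> < inverse (lambda1 Q) \<and> gamma \<theta> Q = c"
  shows "0 < theta_c c Q" "theta_c c Q < inverse (lambda1 Q)"
  using theI'[OF assms] unfolding theta_c_def by auto

lemma ceiling_div_le_imp_le_mult:
  assumes "N > 0" "real_of_int \<lceil>real q / real N\<rceil> \<le> real_of_int (int k)"
  shows "q \<le> k * N"
proof -
  have "real q / real N \<le> real k"
    using assms(2) by (metis le_of_int_ceiling of_int_of_nat_eq order_trans)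
  then have "real q \<le> real k * real N" using assms(1) by (simp add: divide_le_eq)
  then show ?thesis by (metis of_nat_le_iff of_nat_mult)
qed

theorem proposition1:
  fixes A :: "real^'n^'n" and B :: "real^'m^'n" and C :: "real^'n^'p" and D :: "real^'p^'p"
    and c :: real and N :: nat
    and P Pd Pbar :: "nat \<Rightarrow> real^'n^'n"
  assumes reach: "reachable A B"
    and obs: "observable C A"
    and BB: "pos_def (B ** transpose B)"
    and DD: "pos_def (D ** transpose D)"
    and c_pos: "c > 0"
    and N_pos: "N > 0"
    and theta_ex: "\<And>Q::real^'n^'n. pos_def Q \<Longrightarrow>
          \<exists>!\<theta>. 0 < \<theta> \<and> \<theta> < inverse (lambda1 Q) \<and> gamma \<theta> Q = c"
    and P0: "pos_def (P 0)"
    and Pstep: "\<And>t. P (Suc t) = riccati_R c A B C D (P t)"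
    and Pd_def: "\<And>k. Pd k = P (k * N)"
    and Pbar0: "Pbar 0 = B ** transpose B"
    and Pbar_step: "\<And>t. Pbar (Suc t) = riccati A B C D (Pbar t)"
  shows "\<forall>q. (\<forall>t. t \<ge> q + 1 \<longrightarrow> loewner_ge (P t) (Pbar q))
           \<and> (\<forall>k. real_of_int (int k) \<ge> real_of_int \<lceil>real (q + 1) / real N\<rceil>
                  \<longrightarrow> loewner_ge (Pd k) (Pbar q))"
proof -
  note theta = theta_c_bounds[OF theta_ex]
  have Ppd: "pos_def (P t)" for t
    by (induction t) (auto simp: Pstep P0 less_imp_le theta intro: pos_def_riccati_R[OF BB DD])
  have Pbar_pd: "pos_def (Pbar t)" for t
    by (induction t) (auto simp: Pbar0 Pbar_step BB intro: pos_def_riccati[OF BB DD])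
  have P_ge_riccati: "loewner_ge (P (Suc s)) (riccati A B C D (P s))" for s
    unfolding Pstep by (intro riccati_R_ge_riccati[OF BB DD] Ppd theta less_imp_le)
  have main: "\<forall>t \<ge> q + 1. loewner_ge (P t) (Pbar q)" for q
  proof (induction q)
    case 0
    show ?case
    proof (intro allI impI)
      fix t :: nat assume "t \<ge> 0 + 1"
      then obtain s where t: "t = Suc s" by (cases t) auto
      show "loewner_ge (P t) (Pbar 0)"
        unfolding t Pbar0 by (rule loewner_ge_trans[OF P_ge_riccati riccati_ge_BB[OF BB DD Ppd]])
    qed
  next
    case (Suc q)
    show ?case
    proof (intro allI impI)
      fix t :: nat assume "t \<ge> Suc q + 1"
      then obtain s where t: "t = Suc s" and "s \<ge> q + 1" by (cases t) auto
      with Suc.IH have "loewner_ge (riccati A B C D (P s)) (Pbar (Suc q))"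
        unfolding Pbar_step by (intro riccati_mono[OF BB DD] Ppd Pbar_pd) auto
      then show "loewner_ge (P t) (Pbar (Suc q))"
        unfolding t by (rule loewner_ge_trans[OF P_ge_riccati])
    qed
  qed
  show ?thesis
    using main ceiling_div_le_imp_le_mult[OF N_pos, of "q + 1" for q] by (auto simp: Pd_def)
qed

end
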